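(* For every integer $n\ge1$ there exists a graph $\mathcal{G}=(\mathcal{V},\mathcal{E})$ with $V=4n$ vertices (having a perfect matching) such that for any algorithm $\mathcal{A}$ which is $(\epsilon,\delta)$-differentially private on $\mathcal{G}$ and outputs a perfect matching of $\mathcal{G}$, there exist edge weights $w:\mathcal{E}\to\{0,1\}$ such that the expected weight of the matching $\mathcal{A}(w)$ exceeds the weight of the minimum-weight perfect matching by at least $\alpha=\frac{V}{4}\cdot\frac{1-(1+e^{\epsilon})\delta}{1+e^{2\epsilon}}$. In particular, for sufficiently small $\epsilon,\delta$, $\alpha\ge0.12\cdot V$.
   Context: Private edge weight model: for a graph $\mathcal{G}=(\mathcal{V},\mathcal{E})$, a weight function is $w:\mathcal{E}\to\mathbb{R}$. Two weight functions $w,w'$ are neighboring if $\sum_{e\in\mathcal{E}}|w(e)-w'(e)|\le1$. A randomized algorithm $\mathcal{A}$ on weight functions is $(\epsilon,\delta)$-differentially private on $\mathcal{G}$ if for all neighboring $w,w'$ and all sets $S$ of outputs, $\Pr[\mathcal{A}(w)\in S]\le e^{\epsilon}\Pr[\mathcal{A}(w')\in S]+\delta$. The weight of a matching is the sum of the weights of its edges. *)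

theory Defs
  imports "HOL-Probability.Probability"
begin

definition simple_graph :: "'v set \<Rightarrow> 'v set set \<Rightarrow> bool" where
  "simple_graph V E \<longleftrightarrow> finite V \<and> (\<forall>e\<in>E. e \<subseteq> V \<and> card e = 2)"

definition matching :: "'v set set \<Rightarrow> 'v set set \<Rightarrow> bool" where
  "matching E M \<longleftrightarrow> M \<subseteq> E \<and> (\<forall>e\<in>M. \<forall>f\<in>M. e \<noteq> f \<longrightarrow> e \<inter> f = {})"

definition perfect_matching :: "'v set \<Rightarrow> 'v set set \<Rightarrow> 'v set set \<Rightarrow> bool" where
  "perfect_matching V E M \<longleftrightarrow> matching E M \<and> \<Union>M = V"

text \<open>Weight functions w : E \<rightarrow> R, represented as total functions vanishing off E.\<close>
definition weight_fun :: "'v set set \<Rightarrow> ('v set \<Rightarrow> real) \<Rightarrow> bool" where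
  "weight_fun E w \<longleftrightarrow> (\<forall>e. e \<notin> E \<longrightarrow> w e = 0)"

definition neighboring :: "'v set set \<Rightarrow> ('v set \<Rightarrow> real) \<Rightarrow> ('v set \<Rightarrow> real) \<Rightarrow> bool" where
  "neighboring E w w' \<longleftrightarrow> (\<Sum>e\<in>E. \<bar>w e - w' e\<bar>) \<le> 1"

definition matching_weight :: "('v set \<Rightarrow> real) \<Rightarrow> 'v set set \<Rightarrow> real" where
  "matching_weight w M = (\<Sum>e\<in>M. w e)"

definition dp_on :: "'v set set \<Rightarrow> real \<Rightarrow> real \<Rightarrow> (('v set \<Rightarrow> real) \<Rightarrow> 'o pmf) \<Rightarrow> bool" where
  "dp_on E eps delta A \<longleftrightarrow>
     (\<forall>w w'. weight_fun E w \<and> weight_fun E w' \<and> neighboring E w w' \<longrightarrow>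
        (\<forall>S. measure_pmf.prob (A w) S \<le> exp eps * measure_pmf.prob (A w') S + delta))"

end

theory Submission
  imports Defs
begin

text \<open>The graph is a disjoint union of \<open>n\<close> four-cycles. A perfect matching must cover vertex
  \<open>4i+1\<close> of the \<open>i\<close>-th cycle by one of its two edges there; a sign vector \<open>s\<close> plants weight 1
  on one of these two edges in every cycle. The other perfect matching of each cycle avoids all
  planted edges, so the optimum is 0, while the expected weight of the output is the number of
  planted edges it hits. Flipping \<open>s i\<close> to get \<open>s'\<close> moves the weights by distance 2, so group
  privacy gives \<open>P_s[hit i] + exp (2\<epsilon>) P_s'[hit i] \<ge> 1 - (1 + exp \<epsilon>) \<delta>\<close>. Averaging over all
  \<open>2^n\<close> sign vectors yields one whose expected excess is at least
  \<open>n (1 - (1 + exp \<epsilon>) \<delta>) / (1 + exp (2\<epsilon>))\<close>.\<close>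

lemma small_privacy_ratio_bound:
  fixes eps delta :: real
  assumes "0 \<le> eps" "eps < 1/100" "0 \<le> delta" "delta < 1/100"
  shows "0.12 * 4 \<le> (1 - (1 + exp eps) * delta) / (1 + exp (2*eps))"
proof -
  have "eps^2 \<le> 1/10000"
    using assms mult_mono[of eps "1/100" eps "1/100"] by (simp add: power2_eq_square)
  then have exp1: "exp eps \<le> 102/100" and exp2: "exp (2*eps) \<le> 103/100"
    using exp_bound[of eps] exp_bound[of "2*eps"] assms by (auto simp: power_mult_distrib)
  have "(1 + exp eps) * delta \<le> (1 + 102/100) * (1/100)"
    using exp1 assms by (intro mult_mono) auto
  then have "0.12 * 4 * (1 + exp (2*eps)) \<le> 1 - (1 + exp eps) * delta"
    using exp2 by simp
  moreover have "0 < 1 + exp (2*eps)"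
    by (simp add: add_pos_pos)
  ultimately show ?thesis
    by (simp add: pos_le_divide_eq)
qed

lemma sum_ge_by_involution:
  fixes g :: "'a \<Rightarrow> real"
  assumes "finite S" "\<And>s. s \<in> S \<Longrightarrow> f s \<in> S" "\<And>s. f (f s) = s" "0 < 1 + K"
    and pair: "\<And>s. s \<in> S \<Longrightarrow> c \<le> g s + K * g (f s)"
  shows "real (card S) * (c / (1 + K)) \<le> sum g S"
proof -
  have "sum (g \<circ> f) S = sum g S"
    by (rule sum.reindex_bij_witness[of S f f]) (use assms in auto)
  have "real (card S) * c \<le> (\<Sum>s\<in>S. g s + K * g (f s))"
    using sum_mono[OF pair] by simp
  also have "\<dots> = (1 + K) * sum g S"
    using \<open>sum (g \<circ> f) S = sum g S\<close> by (simp add: sum.distrib sum_distrib_left[symmetric] algebra_simps)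
  finally show ?thesis
    using \<open>0 < 1 + K\<close> by (simp add: pos_divide_le_eq mult.commute mult.left_commute)
qed

lemma exists_ge_average:
  fixes g :: "'a \<Rightarrow> real"
  assumes "finite S" "S \<noteq> {}" "real (card S) * b \<le> sum g S"
  shows "\<exists>s\<in>S. b \<le> g s"
proof (rule ccontr)
  assume "\<not> ?thesis"
  then have "sum g S < (\<Sum>s\<in>S. b)"
    using assms(1,2) by (intro sum_strict_mono) auto
  with assms(3) show False by simp
qed

lemma Min_matching_weight_le:
  assumes "finite E" "perfect_matching V E M"
  shows "Min {matching_weight w M' | M'. perfect_matching V E M'} \<le> matching_weight w M"
proof (rule Min_le)
  have "{matching_weight w M' | M'. perfect_matching V E M'} \<subseteq> matching_weight w ` Pow E"
    by (auto simp: perfect_matching_def matching_def)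
  then show "finite {matching_weight w M' | M'. perfect_matching V E M'}"
    using \<open>finite E\<close> by (rule finite_subset[OF _ finite_imageI[OF finite_Pow_iff[THEN iffD2]]])
qed (use assms in blast)

lemma weight_fun_indicator: "D \<subseteq> E \<Longrightarrow> weight_fun E (indicator D)"
  by (auto simp: weight_fun_def indicator_def)

lemma neighboring_commute: "neighboring E w w' \<longleftrightarrow> neighboring E w' w"
  by (simp add: neighboring_def abs_minus_commute)

lemma neighboring_indicator_remove:
  assumes "finite E"
  shows "neighboring E (indicator D) (indicator (D - {x}))"
proof -
  have "(\<Sum>e\<in>E. \<bar>indicator D e - indicator (D - {x}) e\<bar>) \<le> (\<Sum>e\<in>E. if e = x then 1 else 0 :: real)"
    by (intro sum_mono) (auto simp: indicator_def)
  also have "\<dots> \<le> 1"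
    using assms by (simp add: sum.delta)
  finally show ?thesis
    unfolding neighboring_def .
qed

lemma dp_on_two_steps:
  assumes "dp_on E eps delta A" "weight_fun E w1" "weight_fun E w2" "weight_fun E w3"
    and "neighboring E w1 w2" "neighboring E w2 w3"
  shows "measure_pmf.prob (A w1) S \<le> exp (2*eps) * measure_pmf.prob (A w3) S + (1 + exp eps) * delta"
proof -
  have "measure_pmf.prob (A w1) S \<le> exp eps * measure_pmf.prob (A w2) S + delta"
    and "measure_pmf.prob (A w2) S \<le> exp eps * measure_pmf.prob (A w3) S + delta"
    using assms unfolding dp_on_def by blast+
  then have "measure_pmf.prob (A w1) S \<le> exp eps * (exp eps * measure_pmf.prob (A w3) S + delta) + delta"
    by (smt (verit) exp_gt_zero mult_left_mono)
  moreover have "exp (2*eps) = exp eps * exp eps"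
    by (simp add: exp_add[symmetric])
  ultimately show ?thesis
    by (simp add: algebra_simps)
qed

lemma expectation_matching_weight_indicator:
  assumes "finite D" "\<And>M. M \<in> set_pmf p \<Longrightarrow> finite M"
  shows "measure_pmf.expectation p (matching_weight (indicator D))
           = (\<Sum>e\<in>D. measure_pmf.prob p {M. e \<in> M})"
proof -
  have "measure_pmf.expectation p (matching_weight (indicator D))
          = measure_pmf.expectation p (\<lambda>M. \<Sum>e\<in>D. indicator {M. e \<in> M} M)"
  proof (rule integral_cong_AE)
    show "AE M in measure_pmf p. matching_weight (indicator D) M = (\<Sum>e\<in>D. indicator {M. e \<in> M} M)"
    proof (rule AE_pmfI)
      fix M assume "M \<in> set_pmf p"
      then have "matching_weight (indicator D) M = real (card (M \<inter> D))"
        using assms(2) by (simp add: matching_weight_def indicator_def sum.If_cases Int_def)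
      also have "\<dots> = (\<Sum>e\<in>D. indicator {M. e \<in> M} M)"
        using assms(1) by (simp add: indicator_def sum.If_cases Int_def conj_commute)
      finally show "matching_weight (indicator D) M = (\<Sum>e\<in>D. indicator {M. e \<in> M} M)" .
    qed
  qed simp_all
  also have "\<dots> = (\<Sum>e\<in>D. measure_pmf.prob p {M. e \<in> M})"
    by (subst Bochner_Integration.integral_sum) (auto simp: measure_pmf.emeasure_finite less_top[symmetric])
  finally show ?thesis .
qed

definition square :: "nat \<Rightarrow> nat set set" where
  "square i = {{4*i, 4*i+1}, {4*i+1, 4*i+2}, {4*i+2, 4*i+3}, {4*i+3, 4*i}}"

definition squares :: "nat \<Rightarrow> nat set set" where
  "squares n = (\<Union>i<n. square i)"

text \<open>\<open>pivot_edge i b\<close> is the edge at vertex \<open>4*i+1\<close> that \<open>square_matching i b\<close> does not use.\<close>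

definition square_matching :: "nat \<Rightarrow> bool \<Rightarrow> nat set set" where
  "square_matching i b =
     (if b then {{4*i, 4*i+1}, {4*i+2, 4*i+3}} else {{4*i+1, 4*i+2}, {4*i+3, 4*i}})"

definition pivot_edge :: "nat \<Rightarrow> bool \<Rightarrow> nat set" where
  "pivot_edge i b = (if b then {4*i+1, 4*i+2} else {4*i, 4*i+1})"

definition planted_edges :: "nat \<Rightarrow> (nat \<Rightarrow> bool) \<Rightarrow> nat set set" where
  "planted_edges n s = (\<lambda>i. pivot_edge i (s i)) ` {..<n}"

definition avoiding_matching :: "nat \<Rightarrow> (nat \<Rightarrow> bool) \<Rightarrow> nat set set" where
  "avoiding_matching n s = (\<Union>i<n. square_matching i (s i))"

lemma div_four_of_mem_square: "e \<in> square i \<Longrightarrow> x \<in> e \<Longrightarrow> x div 4 = i"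
  unfolding square_def by auto

lemma square_matching_subset: "square_matching i b \<subseteq> square i"
  unfolding square_matching_def square_def by auto

lemma square_matching_disjoint:
  "e \<in> square_matching i b \<Longrightarrow> f \<in> square_matching i b \<Longrightarrow> e \<noteq> f \<Longrightarrow> e \<inter> f = {}"
  unfolding square_matching_def by (auto split: if_splits)

lemma Union_square_matching: "\<Union>(square_matching i b) = {4*i..<4*i+4}"
  unfolding square_matching_def by auto

lemma pivot_edge_in_square: "pivot_edge i b \<in> square i"
  unfolding pivot_edge_def square_def by auto

lemma pivot_edge_notin_square_matching: "pivot_edge i b \<notin> square_matching i b"
  unfolding pivot_edge_def square_matching_def by (auto simp: doubleton_eq_iff)

lemma pivot_edge_eq_iff: "pivot_edge i b = pivot_edge j c \<longleftrightarrow> i = j \<and> b = c"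
  unfolding pivot_edge_def by (auto simp: doubleton_eq_iff; presburger)

lemma pivot_edge_cases:
  "e \<in> square i \<Longrightarrow> 4*i+1 \<in> e \<Longrightarrow> e = pivot_edge i False \<or> e = pivot_edge i True"
  unfolding square_def pivot_edge_def by auto

lemma finite_squares: "finite (squares n)"
  unfolding squares_def square_def by auto

lemma simple_graph_squares: "simple_graph {..<4*n} (squares n)"
  unfolding simple_graph_def squares_def square_def by auto

lemma planted_edges_subset: "planted_edges n s \<subseteq> squares n"
  unfolding planted_edges_def squares_def using pivot_edge_in_square by blast

lemma perfect_matching_avoiding_matching:
  "perfect_matching {..<4*n} (squares n) (avoiding_matching n s)"
  unfolding perfect_matching_def matching_def
proof (intro conjI ballI impI)
  show "avoiding_matching n s \<subseteq> squares n"
    unfolding avoiding_matching_def squares_def using square_matching_subset by blast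
next
  fix e f assume "e \<in> avoiding_matching n s" "f \<in> avoiding_matching n s" "e \<noteq> f"
  then obtain i j where i: "e \<in> square_matching i (s i)" and j: "f \<in> square_matching j (s j)"
    unfolding avoiding_matching_def by blast
  show "e \<inter> f = {}"
  proof (cases "i = j")
    case True
    show ?thesis
      using square_matching_disjoint[OF i j[folded True] \<open>e \<noteq> f\<close>] .
  next
    case False
    have "x div 4 = i" "x div 4 = j" if "x \<in> e" "x \<in> f" for x
      using div_four_of_mem_square[OF subsetD[OF square_matching_subset i] that(1)]
        div_four_of_mem_square[OF subsetD[OF square_matching_subset j] that(2)] .
    with False show ?thesis by blast
  qed
next
  have "\<Union>(avoiding_matching n s) = (\<Union>i<n. \<Union>(square_matching i (s i)))"
    unfolding avoiding_matching_def by blast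
  also have "\<dots> = (\<Union>i<n. {4*i..<4*i+4})"
    by (simp add: Union_square_matching)
  also have "\<dots> = {..<4*n}"
  proof (intro set_eqI iffI)
    fix x assume "x \<in> {..<4*n}"
    then show "x \<in> (\<Union>i<n. {4*i..<4*i+4})"
      by (intro UN_I[of "x div 4"]) auto
  qed auto
  finally show "\<Union>(avoiding_matching n s) = {..<4*n}" .
qed

lemma pivot_edge_notin_avoiding_matching: "pivot_edge j (s j) \<notin> avoiding_matching n s"
proof
  assume "pivot_edge j (s j) \<in> avoiding_matching n s"
  then obtain i where i: "pivot_edge j (s j) \<in> square_matching i (s i)"
    unfolding avoiding_matching_def by blast
  have "(4*j+1) div 4 = i"
    by (rule div_four_of_mem_square[OF subsetD[OF square_matching_subset i]])
      (simp add: pivot_edge_def)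
  then have "j = i" by simp
  with i show False
    using pivot_edge_notin_square_matching by simp
qed

lemma matching_weight_avoiding_matching:
  "matching_weight (indicator (planted_edges n s)) (avoiding_matching n s) = 0"
  unfolding matching_weight_def planted_edges_def indicator_def
  using pivot_edge_notin_avoiding_matching by (auto intro!: sum.neutral)

lemma perfect_matching_contains_pivot_edge:
  assumes "perfect_matching {..<4*n} (squares n) M" "i < n"
  shows "pivot_edge i False \<in> M \<or> pivot_edge i True \<in> M"
proof -
  have "4*i+1 \<in> \<Union>M"
    using assms unfolding perfect_matching_def by auto
  then obtain e where e: "e \<in> M" "4*i+1 \<in> e" by blast
  then obtain j where j: "e \<in> square j"
    using assms(1) unfolding perfect_matching_def matching_def squares_def by blast
  have "j = i"
    using div_four_of_mem_square[OF j e(2)] by simp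
  with e j show ?thesis
    using pivot_edge_cases by blast
qed

lemma inj_on_pivot_edges: "inj_on (\<lambda>j. pivot_edge j (s j)) I"
  by (rule inj_onI) (simp add: pivot_edge_eq_iff)

lemma planted_edges_remove:
  assumes "i < n"
  shows "planted_edges n s - {pivot_edge i (s i)} = (\<lambda>j. pivot_edge j (s j)) ` ({..<n} - {i})"
proof -
  have "(\<lambda>j. pivot_edge j (s j)) ` ({..<n} - {i})
          = (\<lambda>j. pivot_edge j (s j)) ` {..<n} - (\<lambda>j. pivot_edge j (s j)) ` {i}"
    by (rule inj_on_image_set_diff[OF inj_on_pivot_edges]) (use assms in auto)
  then show ?thesis
    by (simp add: planted_edges_def)
qed

lemma planted_edges_update:
  assumes "i < n"
  shows "planted_edges n (s(i := b)) - {pivot_edge i b} = planted_edges n s - {pivot_edge i (s i)}"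
proof -
  have "(\<lambda>j. pivot_edge j ((s(i := b)) j)) ` ({..<n} - {i}) = (\<lambda>j. pivot_edge j (s j)) ` ({..<n} - {i})"
    by (rule image_cong) simp_all
  then show ?thesis
    using planted_edges_remove[OF assms, of s] planted_edges_remove[OF assms, of "s(i := b)"] by simp
qed


locale private_matching_algorithm =
  fixes n :: nat and eps delta :: real
    and A :: "(nat set \<Rightarrow> real) \<Rightarrow> nat set set pmf"
  assumes dp: "dp_on (squares n) eps delta A"
    and output_perfect_matching:
      "\<And>w M. weight_fun (squares n) w \<Longrightarrow> M \<in> set_pmf (A w) \<Longrightarrow> perfect_matching {..<4*n} (squares n) M"
begin

definition pivot_prob :: "(nat \<Rightarrow> bool) \<Rightarrow> nat \<Rightarrow> real" where
  "pivot_prob s i = measure_pmf.prob (A (indicator (planted_edges n s))) {M. pivot_edge i (s i) \<in> M}"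

lemma expected_planted_weight:
  "measure_pmf.expectation (A (indicator (planted_edges n s))) (matching_weight (indicator (planted_edges n s)))
     = (\<Sum>i<n. pivot_prob s i)"
proof -
  have "M \<subseteq> squares n" if "M \<in> set_pmf (A (indicator (planted_edges n s)))" for M
    using output_perfect_matching[OF weight_fun_indicator[OF planted_edges_subset] that]
    unfolding perfect_matching_def matching_def by blast
  then have "measure_pmf.expectation (A (indicator (planted_edges n s))) (matching_weight (indicator (planted_edges n s)))
      = (\<Sum>e\<in>planted_edges n s. measure_pmf.prob (A (indicator (planted_edges n s))) {M. e \<in> M})"
    by (intro expectation_matching_weight_indicator) (auto simp: planted_edges_def intro: finite_subset[OF _ finite_squares])
  also have "\<dots> = (\<Sum>i<n. pivot_prob s i)"
    unfolding pivot_prob_def planted_edges_def[of n s] by (rule sum.reindex_cong[OF inj_on_pivot_edges]) simp_all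
  finally show ?thesis .
qed

lemma pivot_prob_flip:
  assumes "i < n"
  shows "1 - (1 + exp eps) * delta \<le> pivot_prob s i + exp (2*eps) * pivot_prob (s(i := \<not> s i)) i"
proof -
  define s' where "s' = s(i := \<not> s i)"
  define p where "p = A (indicator (planted_edges n s))"
  define hit where "hit b = {M. pivot_edge i b \<in> M}" for b
  have "AE M in measure_pmf p. M \<in> hit (s i) \<union> hit (\<not> s i)"
  proof (rule AE_pmfI)
    fix M assume "M \<in> set_pmf p"
    then have "perfect_matching {..<4*n} (squares n) M"
      unfolding p_def by (rule output_perfect_matching[OF weight_fun_indicator[OF planted_edges_subset]])
    then show "M \<in> hit (s i) \<union> hit (\<not> s i)"
      using perfect_matching_contains_pivot_edge[OF _ assms] unfolding hit_def by (cases "s i") auto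
  qed
  then have "1 = measure_pmf.prob p (hit (s i) \<union> hit (\<not> s i))"
    by (simp add: measure_pmf.prob_eq_1)
  also have "\<dots> \<le> measure_pmf.prob p (hit (s i)) + measure_pmf.prob p (hit (\<not> s i))"
    by (rule measure_subadditive) (simp_all add: measure_pmf.emeasure_finite)
  also have "measure_pmf.prob p (hit (\<not> s i))
      \<le> exp (2*eps) * measure_pmf.prob (A (indicator (planted_edges n s'))) (hit (\<not> s i)) + (1 + exp eps) * delta"
  proof -
    txt \<open>The two planted sets differ only in square \<open>i\<close>, so dropping its planted edge gives a
      weight adjacent to both.\<close>
    let ?w = "indicator (planted_edges n s - {pivot_edge i (s i)}) :: nat set \<Rightarrow> real"
    have "planted_edges n s' - {pivot_edge i (s' i)} = planted_edges n s - {pivot_edge i (s i)}"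
      unfolding s'_def using planted_edges_update[OF assms] by simp
    then have nb2: "neighboring (squares n) ?w (indicator (planted_edges n s'))"
      using neighboring_indicator_remove[OF finite_squares, where D = "planted_edges n s'" and x = "pivot_edge i (s' i)"]
      by (simp add: neighboring_commute)
    have nb1: "neighboring (squares n) (indicator (planted_edges n s)) ?w"
      by (rule neighboring_indicator_remove[OF finite_squares])
    have "weight_fun (squares n) ?w"
      using planted_edges_subset by (blast intro: weight_fun_indicator)
    from dp_on_two_steps[OF dp weight_fun_indicator[OF planted_edges_subset] this
        weight_fun_indicator[OF planted_edges_subset] nb1 nb2]
    show ?thesis
      unfolding p_def .
  qed
  finally show ?thesis
    unfolding pivot_prob_def p_def hit_def s'_def by simp
qed

lemma exists_heavy_planted_edges:
  "\<exists>s. real n * ((1 - (1 + exp eps) * delta) / (1 + exp (2*eps))) \<le> (\<Sum>i<n. pivot_prob s i)"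
proof -
  define S where "S = PiE {..<n} (\<lambda>_. UNIV :: bool set)"
  define B where "B = (1 - (1 + exp eps) * delta) / (1 + exp (2*eps))"
  have "finite S" "S \<noteq> {}"
    unfolding S_def by (simp_all add: finite_PiE PiE_eq_empty_iff)
  have "real (card S) * B \<le> (\<Sum>s\<in>S. pivot_prob s i)" if "i < n" for i
    unfolding B_def
  proof (rule sum_ge_by_involution[OF \<open>finite S\<close>, where f = "\<lambda>s. s(i := \<not> s i)"])
    show "s(i := \<not> s i) \<in> S" if "s \<in> S" for s
      using that \<open>i < n\<close> unfolding S_def by (auto simp: PiE_iff extensional_def)
  qed (use pivot_prob_flip[OF that] in \<open>simp_all add: add_pos_pos\<close>)
  then have "real (card S) * (real n * B) \<le> (\<Sum>i<n. \<Sum>s\<in>S. pivot_prob s i)"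
    using sum_mono[of "{..<n}" "\<lambda>_. real (card S) * B"] by (simp add: mult.left_commute)
  also have "\<dots> = (\<Sum>s\<in>S. \<Sum>i<n. pivot_prob s i)"
    by (rule sum.swap)
  finally show ?thesis
    using exists_ge_average[OF \<open>finite S\<close> \<open>S \<noteq> {}\<close>] unfolding B_def by blast
qed

lemma exists_weight_with_large_excess:
  "\<exists>w. weight_fun (squares n) w \<and> (\<forall>e\<in>squares n. w e \<in> {0, 1}) \<and>
      Min {matching_weight w M | M. perfect_matching {..<4*n} (squares n) M}
        + real n * ((1 - (1 + exp eps) * delta) / (1 + exp (2*eps)))
      \<le> measure_pmf.expectation (A w) (matching_weight w)"
proof -
  obtain s where s: "real n * ((1 - (1 + exp eps) * delta) / (1 + exp (2*eps))) \<le> (\<Sum>i<n. pivot_prob s i)"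
    using exists_heavy_planted_edges by blast
  have "Min {matching_weight (indicator (planted_edges n s)) M | M. perfect_matching {..<4*n} (squares n) M}
          \<le> matching_weight (indicator (planted_edges n s)) (avoiding_matching n s)"
    by (rule Min_matching_weight_le[OF finite_squares perfect_matching_avoiding_matching])
  also have "\<dots> = 0"
    by (rule matching_weight_avoiding_matching)
  finally show ?thesis
    using s expected_planted_weight[of s] weight_fun_indicator[OF planted_edges_subset]
    by (intro exI[of _ "indicator (planted_edges n s)"]) (auto simp: indicator_def)
qed

end

theorem theoremB4:
  fixes n :: nat
  assumes "n \<ge> 1"
  shows "(\<exists>E :: nat set set.
            simple_graph {..<4*n} E \<and>
            (\<exists>M. perfect_matching {..<4*n} E M) \<and>
            (\<forall>(eps::real) (delta::real) (A :: (nat set \<Rightarrow> real) \<Rightarrow> nat set set pmf).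
               0 \<le> eps \<longrightarrow> 0 \<le> delta \<longrightarrow>
               dp_on E eps delta A \<longrightarrow>
               (\<forall>w. weight_fun E w \<longrightarrow> set_pmf (A w) \<subseteq> {M. perfect_matching {..<4*n} E M}) \<longrightarrow>
               (\<exists>w. weight_fun E w \<and> (\<forall>e\<in>E. w e \<in> {0, 1}) \<and>
                  measure_pmf.expectation (A w) (matching_weight w)
                    \<ge> Min {matching_weight w M | M. perfect_matching {..<4*n} E M}
                      + real (4*n) / 4 * ((1 - (1 + exp eps) * delta) / (1 + exp (2*eps))))))
         \<and> (\<exists>eps0 > 0. \<exists>delta0 > 0. \<forall>(eps::real) (delta::real).
               0 \<le> eps \<longrightarrow> eps < eps0 \<longrightarrow> 0 \<le> delta \<longrightarrow> delta < delta0 \<longrightarrow>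
               real (4*n) / 4 * ((1 - (1 + exp eps) * delta) / (1 + exp (2*eps))) \<ge> 0.12 * real (4*n))"
proof (rule conjI, rule exI[of _ "squares n"], intro conjI allI impI)
  show "simple_graph {..<4*n} (squares n)"
    by (rule simple_graph_squares)
  show "\<exists>M. perfect_matching {..<4*n} (squares n) M"
    using perfect_matching_avoiding_matching by blast
next
  fix eps delta :: real and A :: "(nat set \<Rightarrow> real) \<Rightarrow> nat set set pmf"
  assume "dp_on (squares n) eps delta A"
    and "\<forall>w. weight_fun (squares n) w \<longrightarrow> set_pmf (A w) \<subseteq> {M. perfect_matching {..<4*n} (squares n) M}"
  then interpret private_matching_algorithm n eps delta A
    by unfold_locales blast+
  show "\<exists>w. weight_fun (squares n) w \<and> (\<forall>e\<in>squares n. w e \<in> {0, 1}) \<and>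
      measure_pmf.expectation (A w) (matching_weight w)
        \<ge> Min {matching_weight w M | M. perfect_matching {..<4*n} (squares n) M}
          + real (4*n) / 4 * ((1 - (1 + exp eps) * delta) / (1 + exp (2*eps)))"
    using exists_weight_with_large_excess by simp
next
  show "\<exists>eps0 > 0. \<exists>delta0 > 0. \<forall>(eps::real) (delta::real).
          0 \<le> eps \<longrightarrow> eps < eps0 \<longrightarrow> 0 \<le> delta \<longrightarrow> delta < delta0 \<longrightarrow>
          real (4*n) / 4 * ((1 - (1 + exp eps) * delta) / (1 + exp (2*eps))) \<ge> 0.12 * real (4*n)"
  proof (intro exI[of _ "1/100"] conjI allI impI)
    fix eps delta :: real
    assume "0 \<le> eps" "eps < 1/100" "0 \<le> delta" "delta < 1/100"
    from mult_left_mono[OF small_privacy_ratio_bound[OF this], of "real n"]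
    show "real (4*n) / 4 * ((1 - (1 + exp eps) * delta) / (1 + exp (2*eps))) \<ge> 0.12 * real (4*n)"
      by simp
  qed simp_all
qed

end
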